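(* Suppose that $f_1(\Delta)\geq f_1(S(1,d,n))$ holds for all $d,n$ and all $\Delta\in\mathcal{HS}(1,d,n)$. Then $f_k(\Delta)\geq f_k(S(1,d,n))$ holds for all $d,n,k$ and all $\Delta\in\mathcal{HS}(1,d,n)$.
   Context: $f_j(\Delta)$ is the number of $j$-dimensional faces of a simplicial complex $\Delta$. A $d$-dimensional simplicial complex $\Delta$ is a homology $d$-sphere if for every face $F\in\Delta$ (including $F=\emptyset$) and every $j\geq 0$, $\tilde H_j(\mathrm{lk}(F,\Delta);\mathbb{Z})\cong\tilde H_j(S^{d-|F|};\mathbb{Z})$, where $\mathrm{lk}(F,\Delta)=\{T\in\Delta:T\cap F=\emptyset, T\cup F\in\Delta\}$ and $S^m$ is the $m$-sphere. A set $F$ of vertices is a missing face of $\Delta$ if $F\notin\Delta$ but all proper subsets of $F$ lie in $\Delta$; its dimension is $|F|-1$. $\mathcal{HS}(i,d,n)$ is the family of homology $d$-spheres with $n$ vertices and no missing faces of dimension $>i$; thus $\mathcal{HS}(1,d,n)$ consists of flag homology $d$-spheres with $n$ vertices. For $n=2d+2$, $S(1,d,n)$ is the join of $d+1$ copies of the $0$-sphere $\partial\sigma^1$ (two points), i.e. the boundary of the $(d+1)$-dimensional crosspolytope; for $n>2d+2$, $S(1,d,n)$ is the join of $d-1$ copies of $\partial\sigma^1$ with the cycle on $n-2(d-1)$ vertices (equivalently, the $(d-1)$-fold suspension of an $(n-2d+2)$-gon). (Flag homology $d$-spheres have at least $2d+2$ vertices.) *)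

theory Defs
  imports "HOL-Algebra.Algebra"
begin

definition simplicial_complex :: "nat set set \<Rightarrow> bool" where
  "simplicial_complex K \<longleftrightarrow> finite K \<and> K \<noteq> {} \<and> (\<forall>F\<in>K. finite F)
     \<and> (\<forall>F\<in>K. \<forall>G. G \<subseteq> F \<longrightarrow> G \<in> K)"

definition vertices :: "nat set set \<Rightarrow> nat set" where
  "vertices K = \<Union>K"

text \<open>Number of j-dimensional faces (faces with j+1 vertices).\<close>
definition fvec :: "nat set set \<Rightarrow> nat \<Rightarrow> nat" where
  "fvec K j = card {F\<in>K. card F = j + 1}"

definition has_dim :: "nat set set \<Rightarrow> nat \<Rightarrow> bool" where
  "has_dim K d \<longleftrightarrow> (\<exists>F\<in>K. card F = d + 1) \<and> (\<forall>F\<in>K. card F \<le> d + 1)"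

definition link :: "nat set \<Rightarrow> nat set set \<Rightarrow> nat set set" where
  "link F K = {T\<in>K. T \<inter> F = {} \<and> T \<union> F \<in> K}"

definition missing_face :: "nat set set \<Rightarrow> nat set \<Rightarrow> bool" where
  "missing_face K F \<longleftrightarrow> F \<notin> K \<and> (\<forall>G. G \<subset> F \<longrightarrow> G \<in> K)"

text \<open>Chains of faces with q vertices (degree q-1; q = 0 is the empty face,
  giving the augmented complex and hence reduced homology). Orientation is induced
  by the order on nat.\<close>
definition chains :: "nat set set \<Rightarrow> nat \<Rightarrow> (nat set \<Rightarrow> int) set" where
  "chains K q = {c. \<forall>G. c G \<noteq> 0 \<longrightarrow> G \<in> K \<and> card G = q}"

definition bd :: "nat set set \<Rightarrow> (nat set \<Rightarrow> int) \<Rightarrow> (nat set \<Rightarrow> int)" where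
  "bd K c = (\<lambda>G. \<Sum>v\<in>{v. v \<notin> G \<and> insert v G \<in> K}.
                 (-1) ^ card {u\<in>G. u < v} * c (insert v G))"

definition chain_group :: "nat set set \<Rightarrow> nat \<Rightarrow> (nat set \<Rightarrow> int) monoid" where
  "chain_group K q = \<lparr>carrier = chains K q, monoid.mult = (\<lambda>a b G. a G + b G),
                      one = (\<lambda>G. 0)\<rparr>"

definition cycles :: "nat set set \<Rightarrow> nat \<Rightarrow> (nat set \<Rightarrow> int) set" where
  "cycles K q = {c \<in> chains K q. bd K c = (\<lambda>G. 0)}"

definition boundaries :: "nat set set \<Rightarrow> nat \<Rightarrow> (nat set \<Rightarrow> int) set" where
  "boundaries K q = bd K ` chains K (Suc q)"

text \<open>Reduced homology group \<open>H~_j(K;Z)\<close>, j \<ge> 0 a natural number: cycles on faces with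
  j+1 vertices modulo boundaries.\<close>
definition red_homology :: "nat set set \<Rightarrow> nat \<Rightarrow> (nat set \<Rightarrow> int) set monoid" where
  "red_homology K j =
     subgroup_generated (chain_group K (j+1)) (cycles K (j+1)) Mod boundaries K (j+1)"

text \<open>\<open>H~_j(S^m;Z)\<close> is Z for j = m and 0 otherwise (m \<ge> -1 an integer).\<close>
definition homology_like_sphere :: "(nat set \<Rightarrow> int) set monoid \<Rightarrow> nat \<Rightarrow> int \<Rightarrow> bool" where
  "homology_like_sphere H j m \<longleftrightarrow> (if int j = m then H \<cong> integer_group else trivial_group H)"

definition homology_sphere :: "nat set set \<Rightarrow> nat \<Rightarrow> bool" where
  "homology_sphere K d \<longleftrightarrow> simplicial_complex K \<and> has_dim K d \<and>
     (\<forall>F\<in>K. \<forall>j::nat. homology_like_sphere (red_homology (link F K) j) j (int d - int (card F)))"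

definition HS :: "nat \<Rightarrow> nat \<Rightarrow> nat \<Rightarrow> nat set set set" where
  "HS i d n = {K. homology_sphere K d \<and> card (vertices K) = n \<and>
                  (\<forall>F. missing_face K F \<longrightarrow> card F \<le> i + 1)}"

definition join :: "nat set set \<Rightarrow> nat set set \<Rightarrow> nat set set" where
  "join K L = {S \<union> T | S T. S \<in> K \<and> T \<in> L}"

definition zero_sphere :: "nat \<Rightarrow> nat \<Rightarrow> nat set set" where
  "zero_sphere a b = {{}, {a}, {b}}"

fun cross :: "nat \<Rightarrow> nat set set" where
  "cross 0 = {{}}"
| "cross (Suc m) = join (cross m) (zero_sphere (2*m) (2*m+1))"

text \<open>Cycle on the m vertices a, a+1, ..., a+m-1 (m \<ge> 3).\<close>
definition cycle_cx :: "nat \<Rightarrow> nat \<Rightarrow> nat set set" where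
  "cycle_cx a m = {{}} \<union> {{a+i} | i. i < m} \<union> {{a+i, a + (Suc i mod m)} | i. i < m}"

definition S1 :: "nat \<Rightarrow> nat \<Rightarrow> nat set set" where
  "S1 d n = (if n \<le> 2*d+2 then cross (d+1)
             else join (cross (d-1)) (cycle_cx (2*(d-1)) (n - 2*(d-1))))"

end

theory Submission
  imports Defs
begin

(* Proposition 3.2.  Let nfaces K m count the faces of K with m vertices (so f_k = nfaces (k+1))
   and let S1_bound m say that nfaces (S1 d n) m <= nfaces K m for every K in HS(1,d,n).  The
   hypothesis is S1_bound 2; we prove S1_bound (k+1) for all k by induction.
   - S1_bound 1: both sides count vertices once n >= 2d+2.  The edge hypothesis forces this
     (for smaller n, S1 d n is a crosspolytope with more edges than the complete graph on
     n vertices), and for d = 0 it follows from the homology of a 0-sphere.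
   - S1_bound (i+2) implies S1_bound (i+3): vertex links of a flag homology d-sphere are flag
     homology (d-1)-spheres, and the face numbers of S1 (d-1) n_v are affine in n_v.  Summing
     the bound over the vertices, double counting turns the right side into (i+3) nfaces K (i+3)
     and the left side into an affine function of sum_v n_v = 2 f_1(K) >= 2 f_1(S1 d n); a
     binomial identity identifies the result with (i+3) nfaces (S1 d n) (i+3). *)

section \<open>Simplicial complexes and links\<close>

lemma sc_empty: "simplicial_complex K \<Longrightarrow> {} \<in> K"
  unfolding simplicial_complex_def by blast

lemma sc_down: "simplicial_complex K \<Longrightarrow> F \<in> K \<Longrightarrow> G \<subseteq> F \<Longrightarrow> G \<in> K"
  unfolding simplicial_complex_def by blast

lemma sc_finite_face: "simplicial_complex K \<Longrightarrow> F \<in> K \<Longrightarrow> finite F"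
  unfolding simplicial_complex_def by blast

lemma sc_finite: "simplicial_complex K \<Longrightarrow> finite K"
  unfolding simplicial_complex_def by blast

lemma sc_finite_vertices: "simplicial_complex K \<Longrightarrow> finite (vertices K)"
  unfolding simplicial_complex_def vertices_def by blast

lemma link_vertex: "link {v} K = {T\<in>K. v \<notin> T \<and> insert v T \<in> K}"
  unfolding link_def by auto

text \<open>Links of faces in a vertex link are links in the whole complex; this transports the
  local homology condition of a homology sphere to the link of a vertex.\<close>
lemma link_link:
  assumes sc: "simplicial_complex K" and G: "G \<in> link {v} K"
  shows "link G (link {v} K) = link (insert v G) K"
proof
  show "link G (link {v} K) \<subseteq> link (insert v G) K"
    by (auto simp: link_def)
next
  have vG: "v \<notin> G" using G by (simp add: link_vertex)
  show "link (insert v G) K \<subseteq> link G (link {v} K)"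
  proof
    fix T assume T: "T \<in> link (insert v G) K"
    hence TK: "T \<in> K" and dis: "T \<inter> insert v G = {}" and un: "T \<union> insert v G \<in> K"
      unfolding link_def by auto
    have "insert v T \<in> K" "T \<union> G \<in> K" using sc_down[OF sc un] by blast+
    moreover have "insert v (T \<union> G) \<in> K" using un by (metis Un_insert_right)
    ultimately show "T \<in> link G (link {v} K)" using TK dis vG by (auto simp: link_def)
  qed
qed

lemma link_vertex_simplicial_complex:
  assumes sc: "simplicial_complex K" and v: "{v} \<in> K"
  shows "simplicial_complex (link {v} K)"
  unfolding simplicial_complex_def
proof (intro conjI ballI allI impI)
  have sub: "link {v} K \<subseteq> K" by (auto simp: link_def)
  show "finite (link {v} K)" using sc_finite[OF sc] finite_subset[OF sub] by blast
  show "link {v} K \<noteq> {}" using v sc_empty[OF sc] by (auto simp: link_vertex)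
  show "finite F" if "F \<in> link {v} K" for F using that sub sc_finite_face[OF sc] by blast
  fix F G assume F: "F \<in> link {v} K" and GF: "G \<subseteq> F"
  have "F \<in> K" "v \<notin> F" "insert v F \<in> K" using F by (auto simp: link_vertex)
  hence "G \<in> K" "v \<notin> G" "insert v G \<in> K"
    using GF sc_down[OF sc] by (blast, blast, meson insert_mono)
  thus "G \<in> link {v} K" by (simp add: link_vertex)
qed

lemma link_facet:
  assumes sc: "simplicial_complex K" and G: "G \<in> K" and facet: "\<forall>H\<in>K. G \<subseteq> H \<longrightarrow> H = G"
  shows "link G K = {{}}"
proof
  show "link G K \<subseteq> {{}}"
  proof
    fix T assume "T \<in> link G K"
    hence "T \<union> G \<in> K" "T \<inter> G = {}" unfolding link_def by auto
    hence "T \<union> G = G" "T \<inter> G = {}" using facet by auto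
    thus "T \<in> {{}}" by blast
  qed
  show "{{}} \<subseteq> link G K" using G sc_empty[OF sc] by (auto simp: link_def)
qed

section \<open>Vanishing of reduced homology\<close>

lemma subgroup_generated_zero:
  assumes "carrier (chain_group K q) \<inter> S \<subseteq> {\<lambda>G. 0}"
  shows "carrier (subgroup_generated (chain_group K q) S) \<subseteq> {\<lambda>G. 0}"
proof
  fix x assume "x \<in> carrier (subgroup_generated (chain_group K q) S)"
  hence "x \<in> generate (chain_group K q) (carrier (chain_group K q) \<inter> S)"
    by (simp add: carrier_subgroup_generated)
  thus "x \<in> {\<lambda>G. 0}"
  proof (induction rule: generate.induct)
    case one
    then show ?case by (simp add: chain_group_def)
  next
    case (incl h)
    then show ?case using assms by blast
  next
    case (inv h)
    hence h0: "h = (\<lambda>G. 0)" using assms by blast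
    have "inv\<^bsub>chain_group K q\<^esub> h = (\<lambda>G. 0)"
      unfolding m_inv_def h0
      by (rule the_equality) (auto simp: chain_group_def chains_def)
    then show ?case by simp
  next
    case (eng h1 h2)
    then show ?case by (simp add: chain_group_def)
  qed
qed

lemma quotient_of_singleton_not_Z:
  assumes "carrier G \<subseteq> {a}"
  shows "\<not> (G Mod N \<cong> integer_group)"
proof
  assume "G Mod N \<cong> integer_group"
  then obtain h where "h \<in> iso (G Mod N) integer_group"
    unfolding is_iso_def by blast
  hence "bij_betw h (carrier (G Mod N)) (carrier integer_group)" by (simp add: iso_def)
  hence "h ` carrier (G Mod N) = UNIV" by (simp add: bij_betw_def integer_group_def)
  moreover have "carrier (G Mod N) \<subseteq> {r_coset G N a}"
    using assms by (auto simp: carrier_FactGroup)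
  ultimately have "(UNIV::int set) \<subseteq> {h (r_coset G N a)}" by blast
  hence "(0::int) = h (r_coset G N a)" "(1::int) = h (r_coset G N a)" by auto
  thus False by simp
qed

lemma red_homology_not_Z:
  assumes "chains K (j+1) \<inter> cycles K (j+1) \<subseteq> {\<lambda>G. 0}"
  shows "\<not> (red_homology K j \<cong> integer_group)"
  unfolding red_homology_def
  by (rule quotient_of_singleton_not_Z, rule subgroup_generated_zero)
     (use assms in \<open>simp add: chain_group_def\<close>)

lemma red_homology_empty_complex: "\<not> (red_homology {{}} j \<cong> integer_group)"
  by (rule red_homology_not_Z) (force simp: chains_def fun_eq_iff)

text \<open>A single point is contractible: its reduced 0-cycles vanish, since the boundary of a
  0-chain evaluated at the empty face is its coefficient at the point.\<close>
lemma point_no_zero_cycles: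
  assumes vK: "{v} \<in> K" and sub: "\<forall>G\<in>K. G \<subseteq> {v}"
  shows "chains K 1 \<inter> cycles K 1 \<subseteq> {\<lambda>G. 0}"
proof
  fix c assume c: "c \<in> chains K 1 \<inter> cycles K 1"
  hence ch: "\<forall>G. c G \<noteq> 0 \<longrightarrow> G \<in> K \<and> card G = 1" and cyc: "bd K c = (\<lambda>G. 0)"
    by (auto simp: chains_def cycles_def)
  have "{w. w \<notin> {} \<and> insert w {} \<in> K} = {v}" using vK sub by auto
  hence "bd K c {} = c {v}" unfolding bd_def by simp
  hence cv: "c {v} = 0" using cyc by (simp add: fun_eq_iff)
  have "c G = 0" for G
  proof (rule ccontr)
    assume cG: "c G \<noteq> 0"
    hence "G \<in> K" "card G = 1" using ch by auto
    hence "G = {v}" using sub by (auto simp: card_1_singleton_iff)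
    thus False using cv cG by simp
  qed
  thus "c \<in> {\<lambda>G. 0}" by auto
qed

section \<open>Homology spheres\<close>

text \<open>A face of
  maximal size above F is a facet, whose link has no homology; this contradicts the sphere
  condition unless the facet has dimension d.\<close>
lemma homology_sphere_pure:
  assumes hs: "homology_sphere K d" and F: "F \<in> K"
  shows "\<exists>G\<in>K. F \<subseteq> G \<and> card G = d+1"
proof -
  have sc: "simplicial_complex K" and hd: "has_dim K d"
    and hom: "\<forall>F\<in>K. \<forall>j. homology_like_sphere (red_homology (link F K) j) j (int d - int (card F))"
    using hs unfolding homology_sphere_def by auto
  have bnd: "\<forall>G. G \<in> K \<and> F \<subseteq> G \<longrightarrow> card G \<le> d+1" using hd unfolding has_dim_def by auto
  obtain G where G: "G \<in> K" "F \<subseteq> G"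
    and Gmax: "\<forall>H. H \<in> K \<and> F \<subseteq> H \<longrightarrow> card H \<le> card G"
    using ex_has_greatest_nat[of "\<lambda>G. G \<in> K \<and> F \<subseteq> G" F card "d+2"] F bnd by fastforce
  have "H = G" if "H \<in> K" "G \<subseteq> H" for H
    using card_seteq[OF sc_finite_face[OF sc that(1)] that(2)] that G Gmax by blast
  hence lk: "link G K = {{}}" using link_facet[OF sc G(1)] by blast
  have "\<not> card G \<le> d"
  proof
    assume le: "card G \<le> d"
    have "homology_like_sphere (red_homology (link G K) (d - card G)) (d - card G)
            (int d - int (card G))"
      using hom G by blast
    hence "red_homology {{}} (d - card G) \<cong> integer_group"
      using le lk by (simp add: homology_like_sphere_def)
    thus False using red_homology_empty_complex by blast
  qed
  moreover have "card G \<le> d+1" using bnd G by blast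
  ultimately show ?thesis using G by auto
qed

text \<open>A homology 0-sphere has at least two vertices: with a single vertex its reduced
  \<open>H_0\<close> would vanish instead of being Z.\<close>
lemma zero_sphere_two_vertices:
  assumes hs: "homology_sphere K 0"
  shows "card (vertices K) \<ge> 2"
proof (rule ccontr)
  assume few: "\<not> card (vertices K) \<ge> 2"
  have sc: "simplicial_complex K" and hd: "has_dim K 0"
    and hom: "\<forall>F\<in>K. \<forall>j. homology_like_sphere (red_homology (link F K) j) j (int 0 - int (card F))"
    using hs unfolding homology_sphere_def by auto
  obtain v where vK: "{v} \<in> K" using hd unfolding has_dim_def by (auto simp: card_1_singleton_iff)
  have "v \<in> vertices K" using vK by (auto simp: vertices_def)
  moreover have "card (vertices K) \<le> Suc 0" using few by simp
  ultimately have "vertices K = {v}"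
    using card_le_Suc0_iff_eq[OF sc_finite_vertices[OF sc]] by blast
  hence sub: "\<forall>G\<in>K. G \<subseteq> {v}" unfolding vertices_def by blast
  have "homology_like_sphere (red_homology (link {} K) 0) 0 0"
    using hom sc_empty[OF sc] by fastforce
  moreover have "link {} K = K" by (auto simp: link_def)
  ultimately have "red_homology K 0 \<cong> integer_group" by (simp add: homology_like_sphere_def)
  thus False using red_homology_not_Z[of K 0] point_no_zero_cycles[OF vK sub] by simp
qed

text \<open>The link of a vertex of a homology d-sphere has dimension \<open>d-1\<close> (by purity).\<close>
lemma link_has_dim:
  assumes hs: "homology_sphere K d" and d: "d \<ge> 1" and v: "{v} \<in> K"
  shows "has_dim (link {v} K) (d-1)"
  unfolding has_dim_def
proof (intro conjI ballI)
  have sc: "simplicial_complex K" using hs by (simp add: homology_sphere_def)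
  obtain G where G: "G \<in> K" "v \<in> G" "card G = d+1" using homology_sphere_pure[OF hs v] by blast
  have "G - {v} \<in> link {v} K" using G sc_down[OF sc] by (auto simp: link_vertex insert_absorb)
  moreover have "card (G - {v}) = d - 1 + 1" using G d by simp
  ultimately show "\<exists>F\<in>link {v} K. card F = d - 1 + 1" by blast
next
  fix F assume "F \<in> link {v} K"
  hence "insert v F \<in> K" "v \<notin> F" "finite F"
    using sc_finite_face hs by (auto simp: link_vertex homology_sphere_def)
  moreover have "\<forall>F\<in>K. card F \<le> d+1" using hs by (simp add: homology_sphere_def has_dim_def)
  ultimately show "card F \<le> d - 1 + 1" using d by fastforce
qed

lemma link_homology_sphere:
  assumes hs: "homology_sphere K d" and d: "d \<ge> 1" and v: "{v} \<in> K"
  shows "homology_sphere (link {v} K) (d-1)"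
proof -
  have sc: "simplicial_complex K"
    and hom: "\<forall>F\<in>K. \<forall>j. homology_like_sphere (red_homology (link F K) j) j (int d - int (card F))"
    using hs unfolding homology_sphere_def by auto
  have "homology_like_sphere (red_homology (link G (link {v} K)) j) j (int (d-1) - int (card G))"
    if G: "G \<in> link {v} K" for G j
  proof -
    have iG: "insert v G \<in> K" "v \<notin> G" "finite G"
      using G sc_finite_face[OF sc] by (auto simp: link_vertex)
    hence "int d - int (card (insert v G)) = int (d-1) - int (card G)" using d by simp
    thus ?thesis using hom iG link_link[OF sc G] by metis
  qed
  thus ?thesis using link_vertex_simplicial_complex[OF sc v] link_has_dim[OF hs d v]
    by (simp add: homology_sphere_def)
qed

lemma link_missing_face_cone:
  assumes sc: "simplicial_complex K" and mf: "missing_face (link {v} K) F"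
    and vF: "v \<notin> F" and FK: "F \<in> K"
  shows "missing_face K (insert v F)"
  unfolding missing_face_def
proof (intro conjI allI impI)
  have FL: "F \<notin> link {v} K" and sub: "\<forall>G. G \<subset> F \<longrightarrow> G \<in> link {v} K"
    using mf unfolding missing_face_def by auto
  show "insert v F \<notin> K" using FL vF FK by (simp add: link_vertex)
  fix G assume G: "G \<subset> insert v F"
  show "G \<in> K"
  proof (cases "v \<in> G")
    case True
    hence "G - {v} \<subset> F" using G vF by blast
    hence "G - {v} \<in> link {v} K" using sub by blast
    hence "insert v (G - {v}) \<in> K" by (simp add: link_vertex)
    thus ?thesis using True by (simp add: insert_absorb)
  next
    case False
    thus ?thesis using G sc_down[OF sc FK] by blast
  qed
qed

text \<open>Links inherit the bound on missing faces: a large missing face F of the link of v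
  avoids v and yields the missing face \<open>insert v F\<close> (if \<open>F \<in> K\<close>) or F itself (otherwise)
  of K.\<close>
lemma link_missing_faces:
  assumes sc: "simplicial_complex K" and flag: "\<forall>F. missing_face K F \<longrightarrow> card F \<le> i + 1"
  shows "\<forall>F. missing_face (link {v} K) F \<longrightarrow> card F \<le> i + 1"
proof (intro allI impI)
  fix F assume mf: "missing_face (link {v} K) F"
  hence sub: "\<forall>G. G \<subset> F \<longrightarrow> G \<in> link {v} K" unfolding missing_face_def by auto
  show "card F \<le> i + 1"
  proof (rule ccontr)
    assume big: "\<not> card F \<le> i + 1"
    hence finF: "finite F" using card.infinite by force
    have vF: "v \<notin> F"
    proof
      assume "v \<in> F"
      hence "{v} \<subset> F" using big by auto
      thus False using sub by (auto simp: link_vertex)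
    qed
    show False
    proof (cases "F \<in> K")
      case True
      hence "card (insert v F) \<le> i + 1" using flag link_missing_face_cone[OF sc mf vF] by blast
      thus False using big finF vF by simp
    next
      case False
      hence "missing_face K F" using mf unfolding missing_face_def by (auto simp: link_def)
      thus False using flag big by blast
    qed
  qed
qed

lemma link_HS:
  assumes K: "K \<in> HS i d n" and d: "d \<ge> 1" and v: "v \<in> vertices K"
  shows "link {v} K \<in> HS i (d-1) (card (vertices (link {v} K)))"
proof -
  have hs: "homology_sphere K d" and sc: "simplicial_complex K"
    and flag: "\<forall>F. missing_face K F \<longrightarrow> card F \<le> i + 1"
    using K by (auto simp: HS_def homology_sphere_def)
  have "{v} \<in> K" using v sc_down[OF sc] unfolding vertices_def by blast
  thus ?thesis using link_homology_sphere[OF hs d] link_missing_faces[OF sc flag]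
    by (simp add: HS_def)
qed

section \<open>Counting faces\<close>

definition nfaces :: "nat set set \<Rightarrow> nat \<Rightarrow> nat" where
  "nfaces K m = card {F\<in>K. card F = m}"

lemma fvec_nfaces: "fvec K j = nfaces K (Suc j)"
  by (simp add: fvec_def nfaces_def)

lemma nfaces_one:
  assumes sc: "simplicial_complex K"
  shows "nfaces K 1 = card (vertices K)"
proof -
  have "{F\<in>K. card F = 1} = (\<lambda>x. {x}) ` vertices K"
    unfolding vertices_def using sc_down[OF sc] by (auto simp: card_1_singleton_iff)
  thus ?thesis unfolding nfaces_def by (simp add: card_image)
qed

lemma nfaces_link:
  assumes sc: "simplicial_complex K"
  shows "nfaces (link {v} K) m = card {F\<in>K. v \<in> F \<and> card F = Suc m}"
proof -
  have "{F\<in>K. v \<in> F \<and> card F = Suc m} = insert v ` {T \<in> link {v} K. card T = m}"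
  proof
    show "insert v ` {T \<in> link {v} K. card T = m} \<subseteq> {F\<in>K. v \<in> F \<and> card F = Suc m}"
      using sc_finite_face[OF sc] by (auto simp: link_vertex)
  next
    show "{F\<in>K. v \<in> F \<and> card F = Suc m} \<subseteq> insert v ` {T \<in> link {v} K. card T = m}"
    proof
      fix F assume F: "F \<in> {F\<in>K. v \<in> F \<and> card F = Suc m}"
      hence "F - {v} \<in> {T \<in> link {v} K. card T = m}"
        using sc_down[OF sc] sc_finite_face[OF sc] by (auto simp: link_vertex insert_absorb)
      moreover have "F = insert v (F - {v})" using F by auto
      ultimately show "F \<in> insert v ` {T \<in> link {v} K. card T = m}" by blast
    qed
  qed
  moreover have "inj_on (insert v) {T \<in> link {v} K. card T = m}"
    by (auto simp: inj_on_def link_vertex)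
  ultimately show ?thesis unfolding nfaces_def by (simp add: card_image)
qed

lemma double_count:
  assumes sc: "simplicial_complex K"
  shows "(\<Sum>v\<in>vertices K. nfaces (link {v} K) m) = Suc m * nfaces K (Suc m)"
proof -
  have "(\<Sum>v\<in>vertices K. nfaces (link {v} K) m) =
        (\<Sum>v\<in>vertices K. card {F\<in>{F\<in>K. card F = Suc m}. v \<in> F})"
    by (rule sum.cong) (auto simp: nfaces_link[OF sc] intro: arg_cong[where f=card])
  also have "\<dots> = Suc m * card {F\<in>K. card F = Suc m}"
  proof (rule sum_multicount)
    show "finite (vertices K)" using sc_finite_vertices[OF sc] .
    show "finite {F \<in> K. card F = Suc m}" using sc_finite[OF sc] by auto
    show "\<forall>F\<in>{F \<in> K. card F = Suc m}. card {v \<in> vertices K. v \<in> F} = Suc m"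
    proof
      fix F assume "F \<in> {F \<in> K. card F = Suc m}"
      moreover hence "{v \<in> vertices K. v \<in> F} = F" unfolding vertices_def by auto
      ultimately show "card {v \<in> vertices K. v \<in> F} = Suc m" by simp
    qed
  qed
  finally show ?thesis by (simp add: nfaces_def)
qed

lemma sum_link_vertices:
  assumes sc: "simplicial_complex K"
  shows "(\<Sum>v\<in>vertices K. card (vertices (link {v} K))) = 2 * nfaces K 2"
proof -
  have "card (vertices (link {v} K)) = nfaces (link {v} K) 1" if "v \<in> vertices K" for v
  proof -
    have "{v} \<in> K" using that sc_down[OF sc] unfolding vertices_def by blast
    thus ?thesis by (rule nfaces_one[symmetric, OF link_vertex_simplicial_complex[OF sc]])
  qed
  hence "(\<Sum>v\<in>vertices K. card (vertices (link {v} K)))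
       = (\<Sum>v\<in>vertices K. nfaces (link {v} K) 1)" by (rule sum.cong[OF refl])
  also have "\<dots> = 2 * nfaces K 2" using double_count[OF sc, of 1] by (simp add: numeral_2_eq_2)
  finally show ?thesis .
qed

lemma nfaces_two_le:
  assumes sc: "simplicial_complex K"
  shows "nfaces K 2 \<le> card (vertices K) choose 2"
proof -
  have fin: "finite (vertices K)" using sc_finite_vertices[OF sc] .
  have "{F\<in>K. card F = 2} \<subseteq> {B. B \<subseteq> vertices K \<and> card B = 2}"
    unfolding vertices_def by auto
  hence "card {F\<in>K. card F = 2} \<le> card {B. B \<subseteq> vertices K \<and> card B = 2}"
    using fin by (intro card_mono) simp_all
  thus ?thesis unfolding nfaces_def using n_subsets[OF fin] by simp
qed

lemma nfaces_join:
  assumes fK: "finite K" and fL: "finite L"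
    and fKF: "\<forall>F\<in>K. finite F" and fLF: "\<forall>F\<in>L. finite F" and dis: "\<Union>K \<inter> \<Union>L = {}"
  shows "nfaces (join K L) m = (\<Sum>i\<le>m. nfaces K i * nfaces L (m-i))"
proof -
  define P where "P = {(S,T). S\<in>K \<and> T\<in>L \<and> card S + card T = m}"
  have cu: "card (S \<union> T) = card S + card T" if "S \<in> K" "T \<in> L" for S T
    using that fKF fLF dis by (intro card_Un_disjoint) auto
  have img: "{F\<in>join K L. card F = m} = (\<lambda>(S,T). S \<union> T) ` P"
    unfolding join_def P_def using cu by auto
  have inj: "inj_on (\<lambda>(S,T). S \<union> T) P"
  proof (rule inj_onI, clarify)
    fix S T S' T' assume a: "(S,T) \<in> P" "(S',T') \<in> P" "S \<union> T = S' \<union> T'"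
    have "S = (S \<union> T) \<inter> \<Union>K" "S' = (S' \<union> T') \<inter> \<Union>K"
      "T = (S \<union> T) \<inter> \<Union>L" "T' = (S' \<union> T') \<inter> \<Union>L"
      using a(1,2) dis unfolding P_def by auto
    thus "S = S' \<and> T = T'" using a(3) by metis
  qed
  have "P = (\<Union>i\<in>{..m}. {S\<in>K. card S = i} \<times> {T\<in>L. card T = m-i})"
    unfolding P_def by auto
  hence "card P = (\<Sum>i\<le>m. card ({S\<in>K. card S = i} \<times> {T\<in>L. card T = m-i}))"
    by (simp only:) (rule card_UN_disjoint, use fK fL in auto)
  also have "\<dots> = (\<Sum>i\<le>m. nfaces K i * nfaces L (m-i))"
    by (simp add: nfaces_def card_cartesian_product)
  finally show ?thesis using img inj by (simp add: nfaces_def card_image)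
qed

lemma convolution_three:
  fixes f g :: "nat \<Rightarrow> nat"
  assumes "\<forall>t\<ge>3. g t = 0"
  shows "(\<Sum>j\<le>Suc (Suc i). f j * g (Suc (Suc i) - j))
         = f (Suc (Suc i)) * g 0 + f (Suc i) * g 1 + f i * g 2"
proof -
  have "(\<Sum>j\<le>Suc (Suc i). f j * g (Suc (Suc i) - j))
      = (\<Sum>j<i. f j * g (Suc (Suc i) - j)) + f i * g 2 + f (Suc i) * g 1 + f (Suc (Suc i)) * g 0"
    by (simp add: lessThan_Suc_atMost[symmetric] numeral_2_eq_2)
  moreover have "(\<Sum>j<i. f j * g (Suc (Suc i) - j)) = 0"
    using assms by (intro sum.neutral) auto
  ultimately show ?thesis by simp
qed

section \<open>Face numbers of the extremal complexes\<close>

text \<open>The crosspolytope \<open>cross c\<close> is a finite complex on the vertices \<open>0, ..., 2c-1\<close>; this makes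
  the joins used to build the extremal complexes joins of disjoint complexes.\<close>
lemma cross_finite: "finite (cross c) \<and> (\<forall>F\<in>cross c. finite F \<and> F \<subseteq> {..<2 * c})"
proof (induction c)
  case 0
  then show ?case by simp
next
  case (Suc c)
  have "cross (Suc c) = (\<lambda>(S,T). S \<union> T) ` (cross c \<times> zero_sphere (2 * c) (2 * c + 1))"
    by (auto simp: join_def)
  hence "finite (cross (Suc c))" using Suc by (simp add: zero_sphere_def)
  moreover have "\<forall>F\<in>cross (Suc c). finite F \<and> F \<subseteq> {..<2 * Suc c}"
    using Suc by (fastforce simp: join_def zero_sphere_def)
  ultimately show ?case by blast
qed

lemma nfaces_zero_sphere:
  assumes "a \<noteq> b"
  shows "nfaces (zero_sphere a b) m = (if m = 0 then 1 else if m = 1 then 2 else 0)"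
proof -
  have "{F \<in> zero_sphere a b. card F = m} =
        (if m = 0 then {{}} else if m = 1 then {{a},{b}} else {})"
    by (auto simp: zero_sphere_def)
  thus ?thesis using assms by (simp add: nfaces_def)
qed

lemma nfaces_cross: "nfaces (cross c) m = 2^m * (c choose m)"
proof (induction c arbitrary: m)
  case 0
  have e: "{F \<in> {{}}. card F = m} = (if m = 0 then {{}} else {})" by auto
  show ?case unfolding nfaces_def cross.simps e by simp
next
  case (Suc c)
  let ?z = "nfaces (zero_sphere (2 * c) (2 * c + 1))"
  have "\<Union>(cross c) \<subseteq> {..<2 * c}" using cross_finite[of c] by blast
  hence "\<Union>(cross c) \<inter> \<Union>(zero_sphere (2 * c) (2 * c + 1)) = {}"
    unfolding zero_sphere_def by auto
  hence j: "nfaces (cross (Suc c)) m = (\<Sum>i\<le>m. nfaces (cross c) i * ?z (m-i))"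
    unfolding cross.simps
    by (intro nfaces_join) (use cross_finite[of c] in \<open>auto simp: zero_sphere_def\<close>)
  have g: "\<forall>t\<ge>3. ?z t = 0" by (simp add: nfaces_zero_sphere)
  consider "m = 0" | "m = 1" | i where "m = Suc (Suc i)"
    by (metis One_nat_def not0_implies_Suc)
  then show ?case
  proof cases
    case 1
    then show ?thesis using j by (simp add: nfaces_zero_sphere Suc.IH)
  next
    case 2
    then show ?thesis using j by (simp add: nfaces_zero_sphere Suc.IH)
  next
    case (3 i)
    have "nfaces (cross (Suc c)) m
        = nfaces (cross c) (Suc (Suc i)) * ?z 0 + nfaces (cross c) (Suc i) * ?z 1
          + nfaces (cross c) i * ?z 2"
      using j unfolding 3 by (simp only: convolution_three[OF g])
    also have "\<dots> = 2^(i+2) * (c choose (i+2)) + 2^(i+1) * (c choose (i+1)) * 2"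
      by (simp add: nfaces_zero_sphere Suc.IH)
    also have "\<dots> = 2^m * (Suc c choose m)" unfolding 3
      by (simp add: algebra_simps)
    finally show ?thesis .
  qed
qed

lemma cycle_edges_inj:
  assumes L: "L \<ge> 3"
  shows "inj_on (\<lambda>i. {a+i, a + (Suc i mod L)}) {..<L}"
proof (rule inj_onI, rule ccontr)
  fix i j assume i: "i \<in> {..<L}" and j: "j \<in> {..<L}"
    and eq: "{a+i, a + (Suc i mod L)} = {a+j, a + (Suc j mod L)}" and ne: "i \<noteq> j"
  hence "i = Suc j mod L" "j = Suc i mod L" by (auto simp: doubleton_eq_iff)
  hence "i = Suc (Suc i) mod L" using i by (simp add: mod_Suc_eq)
  thus False using L i by (auto simp: mod_Suc split: if_splits)
qed

lemma nfaces_cycle: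
  assumes L: "L \<ge> 3"
  shows "nfaces (cycle_cx a L) m = (if m = 0 then 1 else if m \<le> 2 then L else 0)"
proof -
  define V where "V = (\<lambda>i. {a+i}) ` {..<L}"
  define E where "E = (\<lambda>i. {a+i, a + (Suc i mod L)}) ` {..<L}"
  have cx: "cycle_cx a L = {{}} \<union> V \<union> E"
    unfolding cycle_cx_def V_def E_def by auto
  have cV: "\<forall>F\<in>V. card F = 1" unfolding V_def by auto
  have cE: "\<forall>F\<in>E. card F = 2"
    unfolding E_def using L by (auto simp: mod_Suc)
  have cardV: "card V = L" unfolding V_def by (simp add: card_image inj_on_def)
  have cardE: "card E = L" unfolding E_def using cycle_edges_inj[OF L] by (simp add: card_image)
  have "{F\<in>cycle_cx a L. card F = m} =
        (if m = 0 then {{}} else if m = 1 then V else if m = 2 then E else {})"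
    unfolding cx using cV cE by force
  thus ?thesis using cardV cardE by (simp add: nfaces_def)
qed

text \<open>Number of faces with \<open>i+2\<close> vertices of the join of c copies of \<open>S^0\<close> with an L-cycle;
  it is affine in L with constant term \<open>cyc_const\<close> and slope \<open>cyc_slope\<close>.\<close>
definition cyc_const :: "nat \<Rightarrow> nat \<Rightarrow> nat" where
  "cyc_const c i = 2^(i+2) * (c choose (i+2))"

definition cyc_slope :: "nat \<Rightarrow> nat \<Rightarrow> nat" where
  "cyc_slope c i = 2^(i+1) * (c choose (i+1)) + 2^i * (c choose i)"

definition susp_cycle_faces :: "nat \<Rightarrow> nat \<Rightarrow> nat \<Rightarrow> nat" where
  "susp_cycle_faces c i L = cyc_const c i + L * cyc_slope c i"

lemma S1_crosspolytope: "n \<le> 2*d+2 \<Longrightarrow> S1 d n = cross (d+1)"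
  by (simp add: S1_def)

lemma nfaces_S1_join:
  assumes n: "n > 2*d+2"
  shows "nfaces (S1 d n) m =
    (\<Sum>j\<le>m. nfaces (cross (d-1)) j * nfaces (cycle_cx (2*(d-1)) (n - 2*(d-1))) (m-j))"
proof -
  let ?c = "d-1" and ?L = "n - 2*(d-1)"
  have S: "S1 d n = join (cross ?c) (cycle_cx (2*?c) ?L)" using n by (simp add: S1_def)
  have cyc: "finite (cycle_cx (2*?c) ?L)" "\<forall>F\<in>cycle_cx (2*?c) ?L. finite F \<and> (\<forall>x\<in>F. 2*?c \<le> x)"
    unfolding cycle_cx_def by auto
  have "\<Union>(cross ?c) \<subseteq> {..<2 * ?c}" "\<Union>(cycle_cx (2*?c) ?L) \<subseteq> {2 * ?c..}"
    using cross_finite[of ?c] cyc(2) by auto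
  hence "\<Union>(cross ?c) \<inter> \<Union>(cycle_cx (2*?c) ?L) \<subseteq> {..<2 * ?c} \<inter> {2 * ?c..}"
    by (rule Int_mono)
  moreover have "{..<2 * ?c} \<inter> {2 * ?c..} = ({}::nat set)" by auto
  ultimately have "\<Union>(cross ?c) \<inter> \<Union>(cycle_cx (2*?c) ?L) = {}" by blast
  thus ?thesis unfolding S using cross_finite[of ?c] cyc by (intro nfaces_join) auto
qed

lemma nfaces_S1_vertices: "nfaces (S1 d n) 1 = (if n \<le> 2*d+2 then 2*d+2 else n)"
proof (cases "n \<le> 2*d+2")
  case True
  thus ?thesis by (simp only: S1_crosspolytope nfaces_cross) simp
next
  case False
  define L where "L = n - 2*(d-1)"
  have L: "L \<ge> 3" and n: "n = 2*(d-1) + L" using False unfolding L_def by auto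
  have "nfaces (S1 d n) 1 = nfaces (cross (d-1)) 0 * nfaces (cycle_cx (2*(d-1)) L) 1
      + nfaces (cross (d-1)) 1 * nfaces (cycle_cx (2*(d-1)) L) 0"
    using nfaces_S1_join[of d n 1] False unfolding L_def by simp
  also have "\<dots> = n" unfolding n by (simp add: nfaces_cross nfaces_cycle[OF L])
  finally show ?thesis using False by simp
qed

text \<open>The case
  \<open>n = 2d+2\<close> (the crosspolytope) fits the same formula, as the 4-cycle is the boundary of the
  square.\<close>
lemma nfaces_S1_big:
  assumes d: "d \<ge> 1" and n: "n \<ge> 2*d+2"
  shows "nfaces (S1 d n) (Suc (Suc i)) = susp_cycle_faces (d-1) i (n - 2*(d-1))"
proof (cases "n = 2*d+2")
  case True
  have "nfaces (S1 d n) (Suc (Suc i)) = 2^(i+2) * ((d-1+2) choose (i+2))"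
    using True d by (simp only: S1_crosspolytope nfaces_cross) (simp add: numeral_2_eq_2)
  also have "(d-1+2 choose (i+2)) = (d-1 choose (i+2)) + 2 * (d-1 choose (i+1)) + (d-1 choose i)"
    by (simp add: numeral_2_eq_2)
  also have "2^(i+2) * \<dots> = susp_cycle_faces (d-1) i 4"
    by (simp add: susp_cycle_faces_def cyc_const_def cyc_slope_def algebra_simps)
  also have "4 = n - 2*(d-1)" using True d by simp
  finally show ?thesis .
next
  case False
  define L where "L = n - 2*(d-1)"
  have L: "L \<ge> 3" and big: "n > 2*d+2" using n False unfolding L_def by auto
  have "nfaces (S1 d n) (Suc (Suc i))
      = nfaces (cross (d-1)) (Suc (Suc i)) * nfaces (cycle_cx (2*(d-1)) L) 0
        + nfaces (cross (d-1)) (Suc i) * nfaces (cycle_cx (2*(d-1)) L) 1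
        + nfaces (cross (d-1)) i * nfaces (cycle_cx (2*(d-1)) L) 2"
    unfolding nfaces_S1_join[OF big] L_def[symmetric]
    by (rule convolution_three) (simp add: nfaces_cycle[OF L])
  also have "\<dots> = susp_cycle_faces (d-1) i L"
    by (simp add: nfaces_cycle[OF L] nfaces_cross susp_cycle_faces_def cyc_const_def
        cyc_slope_def algebra_simps)
  finally show ?thesis unfolding L_def .
qed

text \<open>For \<open>d \<le> 1\<close>, \<open>S(1,d,n)\<close> has dimension \<open>\<le> 1\<close> and hence no faces with 3 or more vertices.\<close>
lemma nfaces_S1_small_dim:
  assumes d: "d \<le> 1"
  shows "nfaces (S1 d n) (Suc (Suc (Suc i))) = 0"
proof (cases "n \<le> 2*d+2")
  case True
  thus ?thesis using d by (simp only: S1_crosspolytope nfaces_cross) (simp add: binomial_eq_0)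
next
  case False
  define L where "L = n - 2*(d-1)"
  have L: "L \<ge> 3" and big: "n > 2*d+2" using False unfolding L_def by auto
  have "nfaces (S1 d n) (Suc (Suc (Suc i)))
      = nfaces (cross (d-1)) (Suc (Suc (Suc i))) * nfaces (cycle_cx (2*(d-1)) L) 0
        + nfaces (cross (d-1)) (Suc (Suc i)) * nfaces (cycle_cx (2*(d-1)) L) 1
        + nfaces (cross (d-1)) (Suc i) * nfaces (cycle_cx (2*(d-1)) L) 2"
    unfolding nfaces_S1_join[OF big] L_def[symmetric]
    by (rule convolution_three) (simp add: nfaces_cycle[OF L])
  also have "\<dots> = 0" using d by (simp only: nfaces_cross) (simp add: binomial_eq_0)
  finally show ?thesis .
qed

section \<open>A binomial identity\<close>

lemma binomial_absorption_sum:
  "(int k + 1) * int (p choose Suc k) + int k * int (p choose k) = int p * int (p choose k)"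
proof -
  have "Suc k * (p choose Suc k) + k * (p choose k) = p * (p choose k)"
  proof (cases "k \<le> p")
    case True
    have "Suc k * (p choose Suc k) = p * ((p - 1) choose k)" by (rule binomial_absorption)
    also have "\<dots> = (p - k) * (p choose k)" by (rule binomial_absorb_comp[symmetric])
    finally have "Suc k * (p choose Suc k) = (p - k) * (p choose k)" .
    thus ?thesis using True by (simp add: algebra_simps diff_mult_distrib)
  next
    case False
    thus ?thesis by (simp add: binomial_eq_0)
  qed
  hence "int (Suc k * (p choose Suc k) + k * (p choose k)) = int (p * (p choose k))" by simp
  thus ?thesis by (simp add: algebra_simps)
qed

lemma two_choose_two: "2 * (m choose 2) = m * (m - 1)"
proof -
  have "even (m * (m - 1))" by (cases "even m") simp_all
  thus ?thesis using choose_two[of m] by simp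
qed

text \<open>The polynomial identity behind the next lemma; \<open>b_k\<close> stands for \<open>C(p,i+k)\<close>, \<open>c2\<close> for
  \<open>C(p,2)\<close> and x for \<open>2^i\<close>, related by the absorption identities.\<close>
lemma averaging_polynomial_identity:
  fixes x b0 b1 b2 b3 c2 p i n :: int
  assumes "(i+1)*b1 + i*b0 = p*b0" and "(i+2)*b2 + (i+1)*b1 = p*b1"
    and "(i+3)*b3 + (i+2)*b2 = p*b2" and "2 * c2 = p*p - p"
  shows "n * (4*x*b2 - 2*p*(2*x*b1 + x*b0))
         + 2*(2*x*b1 + x*b0) * (4*(p + c2) + (n - 2*p - 2)*(2*(p+1)+1))
       = (i+3) * (8*x*(b3+b2) + (n - 2*p - 2)*(4*x*(b2+b1) + 2*x*(b1+b0)))"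
  using assms by Groebner_Basis.algebra

text \<open>The face numbers of \<open>S(1,p+2,n)\<close> are recovered from those of \<open>S(1,p+1,\<cdot>)\<close> by the same
  averaging that double counting performs on an arbitrary complex: this is the identity
  \<open>n (A - 2pB) + 2B f_1(S(1,p+2,n)) = (i+3) f_(i+2)(S(1,p+2,n))\<close>, where \<open>A + L B\<close> is the
  vertex-link face number with \<open>L = n_v - 2p\<close>.\<close>
lemma susp_cycle_faces_identity:
  assumes n: "n \<ge> 2*p+2"
  shows "int n * (int (cyc_const p i) - 2 * int p * int (cyc_slope p i))
         + 2 * int (cyc_slope p i) * int (susp_cycle_faces (p+1) 0 (n - 2*(p+1)))
       = int (i+3) * int (susp_cycle_faces (p+1) (Suc i) (n - 2*(p+1)))"
proof -
  define x :: int where "x = 2^i"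
  define b0 b1 b2 b3 :: int where "b0 = int (p choose i)" and "b1 = int (p choose Suc i)"
    and "b2 = int (p choose Suc (Suc i))" and "b3 = int (p choose Suc (Suc (Suc i)))"
  define c2 :: int where "c2 = int (p choose 2)"
  have R0: "(int i+1)*b1 + int i*b0 = int p*b0"
    unfolding b0_def b1_def by (rule binomial_absorption_sum)
  have R1: "(int i+2)*b2 + (int i+1)*b1 = int p*b1"
    unfolding b2_def b1_def using binomial_absorption_sum[of "Suc i" p] by (simp add: add.commute)
  have R2: "(int i+3)*b3 + (int i+2)*b2 = int p*b2"
    unfolding b2_def b3_def using binomial_absorption_sum[of "Suc (Suc i)" p]
    by (simp add: add.commute)
  have C2: "2 * c2 = int p * int p - int p"
  proof -
    have "int (2 * (p choose 2)) = int (p * (p - 1))" by (simp only: two_choose_two)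
    thus ?thesis unfolding c2_def by (cases p) (simp_all add: algebra_simps)
  qed
  define Lc where "Lc = n - 2*(p+1)"
  have Lc: "int Lc = int n - 2*int p - 2" using n unfolding Lc_def by simp
  have "Suc p choose 2 = p + (p choose 2)" by (simp add: numeral_2_eq_2)
  hence F0: "int (susp_cycle_faces (p+1) 0 Lc) = 4*(int p + c2) + int Lc*(2*(int p+1)+1)"
    unfolding susp_cycle_faces_def cyc_const_def cyc_slope_def c2_def
    by (simp add: algebra_simps numeral_2_eq_2)
  have F1: "int (susp_cycle_faces (p+1) (Suc i) Lc)
          = 8*x*(b3+b2) + int Lc*(4*x*(b2+b1) + 2*x*(b1+b0))"
    unfolding susp_cycle_faces_def cyc_const_def cyc_slope_def x_def b0_def b1_def b2_def b3_def
    by (simp add: numeral_3_eq_3 numeral_2_eq_2 algebra_simps)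
  have A: "int (cyc_const p i) = 4*x*b2" and B: "int (cyc_slope p i) = 2*x*b1 + x*b0"
    unfolding cyc_const_def cyc_slope_def x_def b0_def b1_def b2_def
    by (simp_all add: numeral_2_eq_2 power_add)
  have I: "int (i+3) = int i + 3" by simp
  show ?thesis unfolding Lc_def[symmetric] A B F0 F1 Lc I
    using averaging_polynomial_identity[OF R0 R1 R2 C2] by simp
qed

section \<open>The induction\<close>

definition S1_bound :: "nat \<Rightarrow> bool" where
  "S1_bound m \<longleftrightarrow> (\<forall>d n. \<forall>K\<in>HS 1 d n. nfaces (S1 d n) m \<le> nfaces K m)"

lemma HS_simplicial_complex: "K \<in> HS i d n \<Longrightarrow> simplicial_complex K \<and> card (vertices K) = n"
  by (simp add: HS_def homology_sphere_def)

text \<open>The edge bound forces \<open>n \<ge> 2d+2\<close>: for smaller n the extremal complex is the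
  \<open>(d+1)\<close>-crosspolytope, whose \<open>4 C(d+1,2)\<close> edges exceed \<open>C(n,2)\<close>.\<close>
lemma S1_bound_many_vertices:
  assumes edges: "S1_bound 2" and K: "K \<in> HS 1 d n" and d: "d \<ge> 1"
  shows "n \<ge> 2*d+2"
proof (rule ccontr)
  assume "\<not> n \<ge> 2*d+2"
  hence nle: "n \<le> 2*d+1" by simp
  have sc: "simplicial_complex K" and cv: "card (vertices K) = n"
    using HS_simplicial_complex[OF K] by auto
  have "nfaces (S1 d n) 2 = 4 * ((d+1) choose 2)"
    using nle by (simp only: S1_crosspolytope nfaces_cross) simp
  hence "4 * ((d+1) choose 2) \<le> n choose 2"
    using edges K nfaces_two_le[OF sc] cv unfolding S1_bound_def by (metis le_trans)
  hence "4 * (2 * ((d+1) choose 2)) \<le> 2 * (n choose 2)" by simp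
  hence "4 * ((d+1) * d) \<le> n * (n - 1)" unfolding two_choose_two by simp
  moreover have "n * (n - 1) \<le> (2*d+1) * (2*d)" using nle by (intro mult_le_mono) auto
  ultimately have "4*d*d + 4*d \<le> 4*d*d + 2*d" by (simp add: algebra_simps)
  thus False using d by simp
qed

text \<open>The vertex bound: both sides equal n.\<close>
lemma S1_bound_vertices:
  assumes edges: "S1_bound 2"
  shows "S1_bound 1"
  unfolding S1_bound_def
proof (intro allI ballI)
  fix d n K assume K: "K \<in> HS 1 d n"
  have "n \<ge> 2*d+2"
  proof (cases "d = 0")
    case True
    hence "homology_sphere K 0" "card (vertices K) = n" using K by (auto simp: HS_def)
    thus ?thesis using zero_sphere_two_vertices True by force
  qed (use S1_bound_many_vertices[OF edges K] in simp)
  hence "nfaces (S1 d n) 1 = n" using nfaces_S1_vertices[of d n] by simp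
  moreover have "nfaces K 1 = n" using HS_simplicial_complex[OF K] nfaces_one by blast
  ultimately show "nfaces (S1 d n) 1 \<le> nfaces K 1" by simp
qed

lemma averaging_bound:
  assumes sc: "simplicial_complex K" and cv: "card (vertices K) = n" and n: "n \<ge> 2*p+2"
    and edges: "susp_cycle_faces (p+1) 0 (n - 2*(p+1)) \<le> nfaces K 2"
    and links: "\<forall>v\<in>vertices K. 2*p \<le> card (vertices (link {v} K)) \<and>
        susp_cycle_faces p i (card (vertices (link {v} K)) - 2*p) \<le> nfaces (link {v} K) (i+2)"
  shows "susp_cycle_faces (p+1) (Suc i) (n - 2*(p+1)) \<le> nfaces K (i+3)"
proof -
  define V where "V = vertices K"
  define nv where "nv v = card (vertices (link {v} K))" for v
  define A B where "A = int (cyc_const p i)" and "B = int (cyc_slope p i)"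
  have affine: "int (susp_cycle_faces p i (nv v - 2*p)) = A - 2*int p*B + B * int (nv v)"
    if "v \<in> V" for v
  proof -
    have "int (nv v - 2*p) = int (nv v) - 2 * int p"
      using links that unfolding V_def nv_def by simp
    moreover have "int (susp_cycle_faces p i (nv v - 2*p)) = A + int (nv v - 2*p) * B"
      unfolding susp_cycle_faces_def A_def B_def by simp
    ultimately show ?thesis by (simp add: algebra_simps)
  qed
  have sum_nv: "(\<Sum>v\<in>V. int (nv v)) = 2 * int (nfaces K 2)"
    using sum_link_vertices[OF sc] unfolding V_def nv_def by (simp only: of_nat_sum[symmetric])
  have B0: "B \<ge> 0" unfolding B_def by simp
  have "int (i+3) * int (susp_cycle_faces (p+1) (Suc i) (n - 2*(p+1)))
      = int n * (A - 2*int p*B) + 2 * B * int (susp_cycle_faces (p+1) 0 (n - 2*(p+1)))"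
    unfolding A_def B_def using susp_cycle_faces_identity[OF n] by simp
  also have "\<dots> \<le> int n * (A - 2*int p*B) + B * (2 * int (nfaces K 2))"
    using mult_left_mono[OF iffD2[OF of_nat_le_iff edges] B0] by simp
  also have "\<dots> = (\<Sum>v\<in>V. A - 2*int p*B + B * int (nv v))"
    unfolding sum_nv[symmetric] by (simp add: sum.distrib sum_distrib_left cv V_def)
  also have "\<dots> \<le> (\<Sum>v\<in>V. int (nfaces (link {v} K) (i+2)))"
  proof (rule sum_mono)
    fix v assume v: "v \<in> V"
    hence "susp_cycle_faces p i (nv v - 2*p) \<le> nfaces (link {v} K) (i+2)"
      using links unfolding V_def nv_def by blast
    thus "A - 2*int p*B + B * int (nv v) \<le> int (nfaces (link {v} K) (i+2))"
      using affine[OF v] by linarith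
  qed
  also have "\<dots> = int ((i+3) * nfaces K (i+3))"
  proof -
    have "(\<Sum>v\<in>V. nfaces (link {v} K) (i+2)) = (i+3) * nfaces K (i+3)"
      using double_count[OF sc, of "i+2"] unfolding V_def by (simp add: numeral_3_eq_3)
    thus ?thesis by (simp only: of_nat_sum[symmetric])
  qed
  finally show ?thesis by simp
qed

lemma S1_bound_links:
  assumes edges: "S1_bound 2" and IH: "S1_bound (i+2)" and K: "K \<in> HS 1 (p+2) n"
  shows "\<forall>v\<in>vertices K. 2*p \<le> card (vertices (link {v} K)) \<and>
    susp_cycle_faces p i (card (vertices (link {v} K)) - 2*p) \<le> nfaces (link {v} K) (i+2)"
proof
  fix v assume v: "v \<in> vertices K"
  define nv where "nv = card (vertices (link {v} K))"
  have L: "link {v} K \<in> HS 1 (p+1) nv" using link_HS[OF K _ v] unfolding nv_def by simp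
  have nv: "nv \<ge> 2*(p+1)+2" using S1_bound_many_vertices[OF edges L] by simp
  have "nfaces (S1 (p+1) nv) (i+2) \<le> nfaces (link {v} K) (i+2)"
    using IH L unfolding S1_bound_def by blast
  moreover have "nfaces (S1 (p+1) nv) (Suc (Suc i)) = susp_cycle_faces p i (nv - 2*p)"
    using nfaces_S1_big[of "p+1" nv i] nv by simp
  ultimately show "2*p \<le> nv \<and> susp_cycle_faces p i (nv - 2*p) \<le> nfaces (link {v} K) (i+2)"
    using nv by simp
qed

lemma S1_bound_step:
  assumes edges: "S1_bound 2" and IH: "S1_bound (i+2)"
  shows "S1_bound (i+3)"
  unfolding S1_bound_def
proof (intro allI ballI)
  fix d n K assume K: "K \<in> HS 1 d n"
  show "nfaces (S1 d n) (i+3) \<le> nfaces K (i+3)"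
  proof (cases "d \<le> 1")
    case True
    thus ?thesis using nfaces_S1_small_dim[of d n i] by (simp add: numeral_3_eq_3)
  next
    case False
    define p where "p = d - 2"
    have d: "d = p + 2" using False unfolding p_def by simp
    have n: "n \<ge> 2*d+2" using S1_bound_many_vertices[OF edges K] False by simp
    have links: "\<forall>v\<in>vertices K. 2*p \<le> card (vertices (link {v} K)) \<and>
        susp_cycle_faces p i (card (vertices (link {v} K)) - 2*p) \<le> nfaces (link {v} K) (i+2)"
      using S1_bound_links[OF edges IH] K d by simp
    have "nfaces (S1 d n) 2 \<le> nfaces K 2" using edges K unfolding S1_bound_def by blast
    moreover have "nfaces (S1 d n) (Suc (Suc 0)) = susp_cycle_faces (p+1) 0 (n - 2*(p+1))"
      using nfaces_S1_big[of d n 0] n d by simp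
    ultimately have edgesK: "susp_cycle_faces (p+1) 0 (n - 2*(p+1)) \<le> nfaces K 2"
      by (simp add: numeral_2_eq_2)
    have sc: "simplicial_complex K" and cv: "card (vertices K) = n"
      using HS_simplicial_complex[OF K] by auto
    have "susp_cycle_faces (p+1) (Suc i) (n - 2*(p+1)) \<le> nfaces K (i+3)"
      by (rule averaging_bound[OF sc cv _ edgesK]) (use n d links in auto)
    moreover have "nfaces (S1 d n) (Suc (Suc (Suc i))) = susp_cycle_faces (p+1) (Suc i) (n - 2*(p+1))"
      using nfaces_S1_big[of d n "Suc i"] n d by simp
    ultimately show ?thesis by (simp add: numeral_3_eq_3)
  qed
qed

theorem proposition3p2:
  assumes "\<forall>d n. \<forall>K\<in>HS 1 d n. fvec K 1 \<ge> fvec (S1 d n) 1"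
  shows "\<forall>d n k. \<forall>K\<in>HS 1 d n. fvec K k \<ge> fvec (S1 d n) k"
proof -
  have edges: "S1_bound 2"
    using assms by (simp add: S1_bound_def fvec_nfaces numeral_2_eq_2)
  have higher: "S1_bound (Suc (Suc i))" for i
  proof (induction i)
    case 0 show ?case using edges by (simp add: numeral_2_eq_2)
  next
    case (Suc i)
    thus ?case using S1_bound_step[OF edges, of i] by (simp add: numeral_3_eq_3)
  qed
  have "S1_bound (Suc k)" for k
    using S1_bound_vertices[OF edges] higher by (cases k) simp_all
  thus ?thesis by (simp add: S1_bound_def fvec_nfaces)
qed

end
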